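(* Let $(X_{1,\infty},f_{1,\infty},\mu_{1,\infty})$ be a metric nonautonomous dynamical system and let $\mathcal{E}$ be the class of all sequences $\{\mathcal{P}_n\}$ of finite measurable partitions of $X_n$ for which there is $N\ge1$ with $\#\mathcal{P}_n\le N$ for all $n$. Then $\mathcal{E}$ is an admissible class, and it is maximal, i.e., there is no admissible class strictly containing it.
   Context: A metric NDS consists of probability spaces $(X_n,\mathcal{A}_n,\mu_n)$ and measurable maps $f_n:X_n\to X_{n+1}$ with $f_n\mu_n=\mu_{n+1}$; $f_k^n=f_{k+n-1}\circ\cdots\circ f_k$, $f_k^{-n}$ = preimage. An admissible class is a nonempty class $\mathcal{E}$ of sequences of finite measurable partitions $\{\mathcal{P}_n\}$ of $X_n$ such that (A) each member has $\#\mathcal{P}_n\le N$ for some $N$ and all $n$; (B) if $\mathcal{P}_{1,\infty}\in\mathcal{E}$ and $\mathcal{Q}_n$ is coarser than $\mathcal{P}_n$ for all $n$, then $\{\mathcal{Q}_n\}\in\mathcal{E}$; (C) if $\mathcal{P}_{1,\infty}\in\mathcal{E}$ and $m\ge1$ then $\{\bigvee_{i=0}^{m-1}f_k^{-i}\mathcal{P}_{k+i}\}_{k\ge1}\in\mathcal{E}$. *)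

theory Defs
  imports "HOL-Probability.Probability"
begin

text \<open>Indexing convention: spaces are indexed by n = 0,1,2,... (the paper uses 1,2,...).
All spaces X_n live inside one ambient type 'a, as the carriers space (M n).\<close>

definition metric_NDS :: "(nat \<Rightarrow> 'a measure) \<Rightarrow> (nat \<Rightarrow> 'a \<Rightarrow> 'a) \<Rightarrow> bool" where
  "metric_NDS M f \<longleftrightarrow>
     (\<forall>n. prob_space (M n) \<and> f n \<in> M n \<rightarrow>\<^sub>M M (Suc n) \<and> distr (M n) (M (Suc n)) (f n) = M (Suc n))"

fun nds_iter :: "(nat \<Rightarrow> 'a \<Rightarrow> 'a) \<Rightarrow> nat \<Rightarrow> nat \<Rightarrow> 'a \<Rightarrow> 'a" where
  "nds_iter f k 0 = id"
| "nds_iter f k (Suc i) = f (k + i) \<circ> nds_iter f k i"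

definition fin_meas_partition :: "'a measure \<Rightarrow> 'a set set \<Rightarrow> bool" where
  "fin_meas_partition M P \<longleftrightarrow>
     finite P \<and> P \<subseteq> sets M \<and> \<Union>P = space M \<and> disjoint P \<and> {} \<notin> P"

definition coarser :: "'a set set \<Rightarrow> 'a set set \<Rightarrow> bool" where
  "coarser Q P \<longleftrightarrow> (\<forall>A\<in>P. \<exists>B\<in>Q. A \<subseteq> B)"

definition preimage_part :: "'a measure \<Rightarrow> ('a \<Rightarrow> 'a) \<Rightarrow> 'a set set \<Rightarrow> 'a set set" where
  "preimage_part M g P = {g -` A \<inter> space M | A. A \<in> P} - {{}}"

definition join_parts :: "nat \<Rightarrow> (nat \<Rightarrow> 'a set set) \<Rightarrow> 'a set set" where
  "join_parts m Q = {\<Inter>i\<in>{..<m}. A i | A. \<forall>i<m. A i \<in> Q i} - {{}}"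

definition admissible_class ::
  "(nat \<Rightarrow> 'a measure) \<Rightarrow> (nat \<Rightarrow> 'a \<Rightarrow> 'a) \<Rightarrow> (nat \<Rightarrow> 'a set set) set \<Rightarrow> bool" where
  "admissible_class M f E \<longleftrightarrow>
     E \<noteq> {} \<and>
     (\<forall>P\<in>E. \<forall>n. fin_meas_partition (M n) (P n)) \<and>
     (\<forall>P\<in>E. \<exists>N. \<forall>n. card (P n) \<le> N) \<and>
     (\<forall>P\<in>E. \<forall>Q. (\<forall>n. fin_meas_partition (M n) (Q n) \<and> coarser (Q n) (P n)) \<longrightarrow> Q \<in> E) \<and>
     (\<forall>P\<in>E. \<forall>m\<ge>1.
        (\<lambda>k. join_parts m (\<lambda>i. preimage_part (M k) (nds_iter f k i) (P (k + i)))) \<in> E)"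

definition bounded_partition_class ::
  "(nat \<Rightarrow> 'a measure) \<Rightarrow> (nat \<Rightarrow> 'a set set) set" where
  "bounded_partition_class M =
     {P. (\<forall>n. fin_meas_partition (M n) (P n)) \<and> (\<exists>N\<ge>1. \<forall>n. card (P n) \<le> N)}"

end

theory Submission
  imports Defs
begin

text \<open>Admissibility of the class of uniformly bounded partition sequences comes down to two
counting facts: a coarser partition has at most as many blocks, and the join of preimages of
\<open>m\<close> partitions with at most \<open>N\<close> blocks each has at most \<open>N ^ m\<close> blocks. Maximality holds
because axiom (A) already forces every member of an admissible class to be uniformly bounded.\<close>

lemma measurable_nds_iter:
  assumes "metric_NDS M f"
  shows "nds_iter f k i \<in> M k \<rightarrow>\<^sub>M M (k + i)"
proof (induction i)
  case 0
  then show ?case by simp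
next
  case (Suc i)
  have "f (k + i) \<in> M (k + i) \<rightarrow>\<^sub>M M (Suc (k + i))"
    using assms unfolding metric_NDS_def by blast
  with Suc show ?case by (simp add: measurable_comp)
qed

lemma fin_meas_partition_space:
  assumes "space M \<noteq> {}"
  shows "fin_meas_partition M {space M}"
  using assms unfolding fin_meas_partition_def disjoint_def by auto

lemma fin_meas_partition_block_unique:
  assumes "fin_meas_partition M P" "A \<in> P" "B \<in> P" "x \<in> A" "x \<in> B"
  shows "A = B"
  using assms unfolding fin_meas_partition_def disjoint_def by blast

lemma fin_meas_partition_preimage_part:
  assumes g: "g \<in> M \<rightarrow>\<^sub>M M'" and P: "fin_meas_partition M' P"
  shows "fin_meas_partition M (preimage_part M g P)"
proof -
  have "finite (preimage_part M g P)"
    using P unfolding fin_meas_partition_def preimage_part_def by simp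
  moreover have "preimage_part M g P \<subseteq> sets M"
    using P g unfolding fin_meas_partition_def preimage_part_def by (auto intro: measurable_sets)
  moreover have "\<Union>(preimage_part M g P) = space M"
  proof
    show "space M \<subseteq> \<Union>(preimage_part M g P)"
    proof
      fix x assume x: "x \<in> space M"
      then have "g x \<in> space M'" using g by (meson measurable_space)
      then obtain A where "A \<in> P" "g x \<in> A" using P unfolding fin_meas_partition_def by blast
      with x show "x \<in> \<Union>(preimage_part M g P)" unfolding preimage_part_def by blast
    qed
  qed (auto simp: preimage_part_def)
  moreover have "disjoint (preimage_part M g P)"
    unfolding disjoint_def preimage_part_def
    using fin_meas_partition_block_unique[OF P] by blast
  ultimately show ?thesis unfolding fin_meas_partition_def preimage_part_def by blast
qed

lemma card_preimage_part_le:
  assumes "finite P"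
  shows "card (preimage_part M g P) \<le> card P"
proof -
  have "preimage_part M g P \<subseteq> (\<lambda>A. g -` A \<inter> space M) ` P"
    unfolding preimage_part_def by blast
  then have "card (preimage_part M g P) \<le> card ((\<lambda>A. g -` A \<inter> space M) ` P)"
    using assms by (intro card_mono) auto
  also have "\<dots> \<le> card P" using assms by (rule card_image_le)
  finally show ?thesis .
qed

lemma join_parts_subset_image_PiE:
  "join_parts m Q \<subseteq> (\<lambda>A. \<Inter>i\<in>{..<m}. A i) ` PiE {..<m} Q"
proof
  fix S assume "S \<in> join_parts m Q"
  then obtain A where A: "S = (\<Inter>i\<in>{..<m}. A i)" "\<forall>i<m. A i \<in> Q i"
    unfolding join_parts_def by blast
  then have "restrict A {..<m} \<in> PiE {..<m} Q" "S = (\<Inter>i\<in>{..<m}. restrict A {..<m} i)"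
    by auto
  then show "S \<in> (\<lambda>A. \<Inter>i\<in>{..<m}. A i) ` PiE {..<m} Q" by blast
qed

lemma card_join_parts_le:
  assumes "\<And>i. i < m \<Longrightarrow> finite (Q i)"
  shows "card (join_parts m Q) \<le> (\<Prod>i<m. card (Q i))"
proof -
  have fin: "finite (PiE {..<m} Q)" using assms by (intro finite_PiE) auto
  have "card (join_parts m Q) \<le> card ((\<lambda>A. \<Inter>i\<in>{..<m}. A i) ` PiE {..<m} Q)"
    using fin join_parts_subset_image_PiE by (intro card_mono) blast+
  also have "\<dots> \<le> card (PiE {..<m} Q)" using fin by (rule card_image_le)
  also have "\<dots> = (\<Prod>i<m. card (Q i))" by (simp add: card_PiE)
  finally show ?thesis .
qed

lemma fin_meas_partition_join_parts:
  assumes m: "m \<ge> 1" and Q: "\<And>i. i < m \<Longrightarrow> fin_meas_partition M (Q i)"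
  shows "fin_meas_partition M (join_parts m Q)"
proof -
  have "finite (PiE {..<m} Q)" using Q unfolding fin_meas_partition_def by (intro finite_PiE) auto
  then have "finite (join_parts m Q)"
    by (rule finite_subset[OF join_parts_subset_image_PiE finite_imageI])
  moreover have "join_parts m Q \<subseteq> sets M"
  proof
    fix S assume "S \<in> join_parts m Q"
    then obtain A where A: "S = (\<Inter>i\<in>{..<m}. A i)" "\<forall>i<m. A i \<in> Q i"
      unfolding join_parts_def by blast
    have "{..<m} \<noteq> {}" using m by (simp add: lessThan_empty_iff)
    moreover have "A i \<in> sets M" if "i < m" for i
      using A(2) Q that unfolding fin_meas_partition_def by blast
    ultimately have "(\<Inter>i\<in>{..<m}. A i) \<in> sets M" by (intro sets.finite_INT) auto
    with A(1) show "S \<in> sets M" by simp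
  qed
  moreover have "\<Union>(join_parts m Q) = space M"
  proof
    show "\<Union>(join_parts m Q) \<subseteq> space M"
    proof
      fix x assume "x \<in> \<Union>(join_parts m Q)"
      then obtain A where "x \<in> (\<Inter>i\<in>{..<m}. A i)" "\<forall>i<m. A i \<in> Q i"
        unfolding join_parts_def by blast
      with m have "x \<in> A 0" "A 0 \<in> Q 0" by auto
      with Q[of 0] m show "x \<in> space M" unfolding fin_meas_partition_def by auto
    qed
    show "space M \<subseteq> \<Union>(join_parts m Q)"
    proof
      fix x assume x: "x \<in> space M"
      define A where "A i = (SOME B. B \<in> Q i \<and> x \<in> B)" for i
      have A: "A i \<in> Q i \<and> x \<in> A i" if "i < m" for i
      proof -
        have "\<exists>B. B \<in> Q i \<and> x \<in> B" using Q[OF that] x unfolding fin_meas_partition_def by blast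
        then show ?thesis unfolding A_def by (rule someI_ex)
      qed
      then have "x \<in> (\<Inter>i\<in>{..<m}. A i)" by blast
      moreover from A have "(\<Inter>i\<in>{..<m}. A i) \<in> join_parts m Q"
        unfolding join_parts_def by blast
      ultimately show "x \<in> \<Union>(join_parts m Q)" by blast
    qed
  qed
  moreover have "disjoint (join_parts m Q)"
    unfolding disjoint_def
  proof (intro ballI impI)
    fix a b assume "a \<in> join_parts m Q" "b \<in> join_parts m Q" "a \<noteq> b"
    then obtain A B where A: "a = (\<Inter>i\<in>{..<m}. A i)" "\<forall>i<m. A i \<in> Q i"
      and B: "b = (\<Inter>i\<in>{..<m}. B i)" "\<forall>i<m. B i \<in> Q i" and "a \<noteq> b"
      unfolding join_parts_def by blast
    show "a \<inter> b = {}"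
    proof (rule ccontr)
      assume "a \<inter> b \<noteq> {}"
      then obtain x where x: "x \<in> a" "x \<in> b" by blast
      have "A i = B i" if "i < m" for i
      proof (rule fin_meas_partition_block_unique[OF Q[OF that]])
        show "A i \<in> Q i" "B i \<in> Q i" using A(2) B(2) that by auto
        show "x \<in> A i" "x \<in> B i" using x A(1) B(1) that by auto
      qed
      with A B \<open>a \<noteq> b\<close> show False by auto
    qed
  qed
  moreover have "{} \<notin> join_parts m Q" unfolding join_parts_def by blast
  ultimately show ?thesis unfolding fin_meas_partition_def by blast
qed

lemma card_le_if_coarser:
  assumes P: "fin_meas_partition M P" and Q: "fin_meas_partition M Q" and "coarser Q P"
  shows "card Q \<le> card P"
proof -
  define block where "block A = (SOME B. B \<in> Q \<and> A \<subseteq> B)" for A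
  have "Q \<subseteq> block ` P"
  proof
    fix B assume B: "B \<in> Q"
    with Q obtain x where x: "x \<in> B" unfolding fin_meas_partition_def by (metis ex_in_conv)
    with B Q have "x \<in> space M" unfolding fin_meas_partition_def by blast
    with P obtain A where A: "A \<in> P" "x \<in> A" unfolding fin_meas_partition_def by blast
    from A(1) \<open>coarser Q P\<close> have "\<exists>B. B \<in> Q \<and> A \<subseteq> B" unfolding coarser_def by blast
    then have "block A \<in> Q \<and> A \<subseteq> block A" unfolding block_def by (rule someI_ex)
    with A(2) have "block A = B" using fin_meas_partition_block_unique[OF Q _ B _ x] by blast
    with A(1) show "B \<in> block ` P" by blast
  qed
  moreover have "finite P" using P unfolding fin_meas_partition_def by blast
  ultimately have "card Q \<le> card (block ` P)" by (intro card_mono) auto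
  also have "\<dots> \<le> card P" using \<open>finite P\<close> by (rule card_image_le)
  finally show ?thesis .
qed

lemma bounded_partition_class_coarser:
  assumes "P \<in> bounded_partition_class M"
    and Q: "\<forall>n. fin_meas_partition (M n) (Q n) \<and> coarser (Q n) (P n)"
  shows "Q \<in> bounded_partition_class M"
proof -
  obtain N where N: "N \<ge> 1" "\<forall>n. card (P n) \<le> N" and part: "\<forall>n. fin_meas_partition (M n) (P n)"
    using assms(1) unfolding bounded_partition_class_def by blast
  have "card (Q n) \<le> N" for n
  proof -
    have "card (Q n) \<le> card (P n)"
      using part Q by (intro card_le_if_coarser[of "M n"]) auto
    also have "\<dots> \<le> N" using N(2) by blast
    finally show ?thesis .
  qed
  with Q N(1) show ?thesis unfolding bounded_partition_class_def by blast
qed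

lemma bounded_partition_class_join_preimages:
  assumes "metric_NDS M f" and P: "P \<in> bounded_partition_class M" and m: "m \<ge> 1"
  shows "(\<lambda>k. join_parts m (\<lambda>i. preimage_part (M k) (nds_iter f k i) (P (k + i))))
           \<in> bounded_partition_class M"
proof -
  obtain N where N: "N \<ge> 1" "\<forall>n. card (P n) \<le> N" and part: "\<forall>n. fin_meas_partition (M n) (P n)"
    using P unfolding bounded_partition_class_def by blast
  define R where "R k i = preimage_part (M k) (nds_iter f k i) (P (k + i))" for k i
  have R_part: "fin_meas_partition (M k) (R k i)" for k i
    unfolding R_def
    by (rule fin_meas_partition_preimage_part[OF measurable_nds_iter[OF assms(1)] part[rule_format]])
  have R_card: "card (R k i) \<le> N" for k i
  proof -
    have "finite (P (k + i))" using part unfolding fin_meas_partition_def by blast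
    then show ?thesis
      unfolding R_def using card_preimage_part_le N(2) le_trans by blast
  qed
  have R_join_card: "card (join_parts m (R k)) \<le> N ^ m" for k
  proof -
    have "card (join_parts m (R k)) \<le> (\<Prod>i<m. card (R k i))"
      using R_part unfolding fin_meas_partition_def by (intro card_join_parts_le) blast
    also have "\<dots> \<le> (\<Prod>i<m. N)" using R_card by (intro prod_mono) auto
    finally show ?thesis by simp
  qed
  have "fin_meas_partition (M k) (join_parts m (R k))" for k
    using fin_meas_partition_join_parts[OF m R_part] .
  moreover have "N ^ m \<ge> 1" using N(1) by simp
  ultimately have "(\<lambda>k. join_parts m (R k)) \<in> bounded_partition_class M"
    using R_join_card unfolding bounded_partition_class_def by blast
  then show ?thesis unfolding R_def .
qed

lemma admissible_bounded_partition_class: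
  assumes "metric_NDS M f"
  shows "admissible_class M f (bounded_partition_class M)"
  unfolding admissible_class_def
proof (intro conjI)
  have "fin_meas_partition (M n) {space (M n)}" for n
  proof (rule fin_meas_partition_space)
    show "space (M n) \<noteq> {}"
      using assms prob_space.not_empty unfolding metric_NDS_def by blast
  qed
  then have "(\<lambda>n. {space (M n)}) \<in> bounded_partition_class M"
    unfolding bounded_partition_class_def by (auto intro!: exI[where x = 1])
  then show "bounded_partition_class M \<noteq> {}" by blast
  show "\<forall>P\<in>bounded_partition_class M. \<forall>n. fin_meas_partition (M n) (P n)"
    "\<forall>P\<in>bounded_partition_class M. \<exists>N. \<forall>n. card (P n) \<le> N"
    unfolding bounded_partition_class_def by blast+
  show "\<forall>P\<in>bounded_partition_class M. \<forall>Q. (\<forall>n. fin_meas_partition (M n) (Q n) \<and> coarser (Q n) (P n))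
          \<longrightarrow> Q \<in> bounded_partition_class M"
    using bounded_partition_class_coarser by blast
  show "\<forall>P\<in>bounded_partition_class M. \<forall>m\<ge>1.
          (\<lambda>k. join_parts m (\<lambda>i. preimage_part (M k) (nds_iter f k i) (P (k + i))))
            \<in> bounded_partition_class M"
    using bounded_partition_class_join_preimages[OF assms] by blast
qed

lemma admissible_class_subset_bounded_partition_class:
  assumes "admissible_class M f E"
  shows "E \<subseteq> bounded_partition_class M"
proof
  fix P assume "P \<in> E"
  with assms have part: "\<forall>n. fin_meas_partition (M n) (P n)" and "\<exists>N. \<forall>n. card (P n) \<le> N"
    unfolding admissible_class_def by simp_all
  then obtain N where N: "\<forall>n. card (P n) \<le> N" by blast
  have "\<forall>n. card (P n) \<le> max N 1" using N by (simp add: le_max_iff_disj)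
  moreover have "max N 1 \<ge> 1" by simp
  ultimately show "P \<in> bounded_partition_class M"
    using part unfolding bounded_partition_class_def by blast
qed

theorem mainTheorem10:
  fixes M :: "nat \<Rightarrow> 'a measure" and f :: "nat \<Rightarrow> 'a \<Rightarrow> 'a"
  assumes "metric_NDS M f"
  shows "admissible_class M f (bounded_partition_class M) \<and>
         \<not> (\<exists>E'. admissible_class M f E' \<and> bounded_partition_class M \<subset> E')"
proof
  show "admissible_class M f (bounded_partition_class M)"
    using assms by (rule admissible_bounded_partition_class)
  show "\<not> (\<exists>E'. admissible_class M f E' \<and> bounded_partition_class M \<subset> E')"
  proof
    assume "\<exists>E'. admissible_class M f E' \<and> bounded_partition_class M \<subset> E'"
    then obtain E' where "admissible_class M f E'" "bounded_partition_class M \<subset> E'" by blast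
    with admissible_class_subset_bounded_partition_class show False by blast
  qed
qed

end
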